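(* For all integers $n\ge 0$, $$\left\lfloor \frac{\varphi+2}{5}\,n\right\rfloor \le a(n)\le \lfloor \varphi n\rfloor .$$
   Context: $\varphi=(1+\sqrt5)/2$. Let $(F_n)_{n\ge 0}$ be the Fibonacci numbers: $F_0=0$, $F_1=1$, $F_n=F_{n-1}+F_{n-2}$ for $n\ge 2$. Define $(a(n))_{n\ge 0}$ (OEIS A105774) by $a(0)=0$, $a(1)=1$, and for $n\ge 2$, $a(n)=F_{j+1}-a(n-F_j)$, where $j\ge 2$ is the unique index with $F_j<n\le F_{j+1}$. *)

theory Defs
  imports Complex_Main
begin

fun F :: "nat \<Rightarrow> nat" where
  "F 0 = 0"
| "F (Suc 0) = 1"
| "F (Suc (Suc n)) = F (Suc n) + F n"

definition phi :: real where "phi = (1 + sqrt 5) / 2"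

lemma F_mono_step: "F j \<le> F (Suc j)"
  by (induction j rule: F.induct) auto

lemma F_mono: "i \<le> j \<Longrightarrow> F i \<le> F j"
  by (induction j) (auto simp: le_Suc_eq intro: le_trans[OF _ F_mono_step])

lemma F_strict: "j \<ge> 2 \<Longrightarrow> F j < F (Suc j)"
proof (cases j)
  case (Suc m)
  assume "j \<ge> 2" then have "m \<ge> 1" using Suc by auto
  then have "F m \<ge> 1" using F_mono[of 1 m] by auto
  then show ?thesis using Suc by auto
qed simp

lemma F_ge: "F (Suc (Suc j)) \<ge> j"
proof (induction j)
  case (Suc j) then show ?case using F_strict[of "Suc (Suc j)"] by auto
qed simp

definition fibidx :: "nat \<Rightarrow> nat" where
  "fibidx n = (THE j. 2 \<le> j \<and> F j < n \<and> n \<le> F (Suc j))"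

lemma fibidx_ex: "n \<ge> 2 \<Longrightarrow> \<exists>j. 2 \<le> j \<and> F j < n \<and> n \<le> F (Suc j)"
proof -
  assume n: "n \<ge> 2"
  define j where "j = (LEAST j. 2 \<le> j \<and> n \<le> F (Suc j))"
  have ex: "2 \<le> Suc n \<and> n \<le> F (Suc (Suc n))" using F_ge[of n] n by simp
  have j: "2 \<le> j \<and> n \<le> F (Suc j)" unfolding j_def by (rule LeastI[of "\<lambda>j. 2 \<le> j \<and> n \<le> F (Suc j)", OF ex])
  have "F j < n"
  proof (cases "j = 2")
    case True then show ?thesis using n by (simp add: numeral_2_eq_2)
  next
    case False
    then obtain k where k: "j = Suc k" "k \<ge> 2" using j by (cases j) auto
    have "\<not> (2 \<le> k \<and> n \<le> F (Suc k))"
      using not_less_Least[of k "\<lambda>j. 2 \<le> j \<and> n \<le> F (Suc j)"] k unfolding j_def by auto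
    then show ?thesis using k by auto
  qed
  then show ?thesis using j by blast
qed

lemma fibidx_uniq:
  assumes "2 \<le> i" "F i < n" "n \<le> F (Suc i)" "2 \<le> j" "F j < n" "n \<le> F (Suc j)"
  shows "i = j"
proof (rule ccontr)
  assume "i \<noteq> j"
  then consider "i < j" | "j < i" by linarith
  then show False
  proof cases
    case 1 then have "F (Suc i) \<le> F j" by (intro F_mono) auto
    then show False using assms by auto
  next
    case 2 then have "F (Suc j) \<le> F i" by (intro F_mono) auto
    then show False using assms by auto
  qed
qed

lemma fibidx: "n \<ge> 2 \<Longrightarrow> 2 \<le> fibidx n \<and> F (fibidx n) < n \<and> n \<le> F (Suc (fibidx n))"
  unfolding fibidx_def
  by (rule theI') (use fibidx_ex fibidx_uniq in blast)

function A :: "nat \<Rightarrow> int" where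
  "A n = (if n = 0 then 0 else if n = 1 then 1
          else int (F (Suc (fibidx n))) - A (n - F (fibidx n)))"
  by auto
termination
proof (relation "measure id")
  fix n :: nat assume "\<not> n = 0" "\<not> n = 1"
  then have "n \<ge> 2" by auto
  then have "fibidx n \<ge> 2" using fibidx by blast
  then have "F (fibidx n) \<ge> 1" using F_mono[of 1 "fibidx n"] by auto
  then show "(n - F (fibidx n), n) \<in> measure id" using \<open>n \<ge> 2\<close> by auto
qed auto

end

theory Submission
  imports Defs "HOL-Number_Theory.Fib"
begin

(* Write n = F (t + 2) + m with 1 \<le> m \<le> F (t + 1), so that A n = F (t + 3) - A m.
   With kappa = (phi + 2) / 5 = phi / sqrt 5 this recursion exchanges A + kappa n and A - kappa n:
     A n - kappa n = F (t + 3) - kappa F (t + 2) - (A m + kappa m),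
     A n + kappa n = F (t + 3) + kappa F (t + 2) - (A m - kappa m).
   Hence both are bounded simultaneously by strong induction, for n \<le> F (k + 2): A + kappa n from
   above by sum_bound k and A - kappa n from below by diff_bound k > -1/2. The corrections
   rho^k / 5 (rho = 1 / phi) are tuned so that the induction closes exactly, the Binet error
   psi^(k+2) / sqrt 5 being absorbed by rho^k - rho^(k+4) = sqrt 5 rho^(k+2).
   The lower bound A n > kappa n - 1/2 yields A \<ge> 0, hence A n \<le> F (t + 3) \<le> phi F (t + 2) + 1 \<le> phi n. *)

lemma F_eq_fib: "F = fib"
proof
  show "F n = fib n" for n by (induction n rule: fib.induct) simp_all
qed

definition psi :: real where "psi = (1 - sqrt 5) / 2"
definition rho :: real where "rho = (sqrt 5 - 1) / 2"
definition kappa :: real where "kappa = (phi + 2) / 5"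

lemma F_closed_form: "real (F n) = (phi ^ n - psi ^ n) / sqrt 5"
  unfolding F_eq_fib phi_def psi_def by (rule fib_closed_form)

lemma phi_minus_psi: "phi - psi = sqrt 5"
  by (simp add: phi_def psi_def field_simps)

lemma phi_plus_psi: "phi + psi = 1"
  by (simp add: phi_def psi_def field_simps)

lemma kappa_eq: "kappa = phi / sqrt 5"
  by (simp add: kappa_def phi_def field_simps)

lemma psi_eq_neg_rho: "psi = - rho"
  by (simp add: psi_def rho_def field_simps)

lemma rho_bounds: "0 < rho" "rho < 1"
proof -
  have "1 < sqrt (5::real)" "sqrt (5::real) < 3"
    by (simp_all add: real_less_lsqrt real_less_rsqrt)
  then show "0 < rho" "rho < 1" by (simp_all add: rho_def)
qed

lemma F_Suc_minus_phi_mult: "real (F (Suc n)) - phi * F n = psi ^ n"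
proof -
  have "real (F (Suc n)) - phi * F n = psi ^ n * (phi - psi) / sqrt 5"
    by (simp add: F_closed_form field_simps)
  then show ?thesis by (simp add: phi_minus_psi)
qed

lemma F_add_2_plus_F: "real (F (n + 2)) + F n = phi ^ (n + 1) + psi ^ (n + 1)"
proof -
  have phi: "phi\<^sup>2 + 1 = sqrt 5 * phi" and psi: "psi\<^sup>2 + 1 = - sqrt 5 * psi"
    by (simp_all add: phi_def psi_def power2_eq_square field_simps)
  have "real (F (n + 2)) + F n = (phi ^ n * (phi\<^sup>2 + 1) - psi ^ n * (psi\<^sup>2 + 1)) / sqrt 5"
    unfolding F_closed_form by (simp add: power_add power2_eq_square field_simps)
  also have "\<dots> = phi ^ (n + 1) + psi ^ (n + 1)"
    unfolding phi psi by (simp add: field_simps)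
  finally show ?thesis .
qed

lemma kappa_mult_F_add_2_plus_F:
  "kappa * (real (F (n + 2)) + F n) - F (n + 2) = psi ^ (n + 1) / sqrt 5"
proof -
  have "kappa * (real (F (n + 2)) + F n) - F (n + 2) = psi ^ (n + 1) * (phi + psi) / sqrt 5"
    unfolding F_add_2_plus_F unfolding F_closed_form kappa_eq by (simp add: power_add field_simps)
  then show ?thesis by (simp add: phi_plus_psi)
qed

lemma rho_pow_add_4: "rho ^ (n + 4) = rho ^ n - sqrt 5 * rho ^ (n + 2)"
proof -
  have rho4: "rho ^ 4 = 1 - sqrt 5 * rho\<^sup>2"
    by (simp add: rho_def field_simps power_def numeral_eq_Suc)
  have "rho ^ (n + 4) = rho ^ n * (1 - sqrt 5 * rho\<^sup>2)"
    by (simp only: power_add rho4)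
  also have "\<dots> = rho ^ n - sqrt 5 * rho ^ (n + 2)"
    by (simp only: power_add right_diff_distrib mult_1_right mult.left_commute)
  finally show ?thesis .
qed

lemma psi_pow_le_rho_pow: "psi ^ n \<le> rho ^ n"
proof -
  have "psi ^ n \<le> \<bar>psi\<bar> ^ n" by (simp flip: power_abs)
  then show ?thesis using rho_bounds by (simp add: psi_eq_neg_rho)
qed

lemma kappa_bounds: "0 < kappa" "kappa < 1"
proof -
  have sqrt_lt: "sqrt (5::real) < 3" by (simp add: real_less_lsqrt)
  then show "0 < kappa" by (simp add: kappa_def phi_def add_pos_nonneg)
  show "kappa < 1" using sqrt_lt by (simp add: kappa_def phi_def)
qed

definition sum_bound :: "nat \<Rightarrow> real" where
  "sum_bound k = F (k + 2) + kappa * F (k + 1) + 1/2 - rho ^ k / 5"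

definition diff_bound :: "nat \<Rightarrow> real" where
  "diff_bound k = rho ^ (k + 2) / 5 - 1/2"

definition level_bounded :: "nat \<Rightarrow> real \<Rightarrow> nat \<Rightarrow> bool" where
  "level_bounded k a n \<longleftrightarrow> a + kappa * n \<le> sum_bound k \<and> diff_bound k \<le> a - kappa * n"

lemma diff_bound_gt: "- 1/2 < diff_bound k"
  using rho_bounds by (simp add: diff_bound_def)

lemma diff_bound_neg: "diff_bound k < 0"
  using rho_bounds power_le_one[of rho "k + 2"] by (simp add: diff_bound_def)

lemma incseq_sum_bound: "incseq sum_bound"
proof (rule incseq_SucI)
  fix k
  have "F (k + 2) \<le> F (k + 3)" "F (k + 1) \<le> F (k + 2)" by (rule F_mono, simp)+
  then have "real (F (k + 2)) + kappa * F (k + 1) \<le> F (k + 3) + kappa * F (k + 2)"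
    using kappa_bounds by (intro add_mono mult_left_mono) simp_all
  moreover have "rho ^ Suc k \<le> rho ^ k" using rho_bounds by (simp add: power_decreasing)
  ultimately show "sum_bound k \<le> sum_bound (Suc k)"
    by (simp add: sum_bound_def numeral_eq_Suc del: F.simps)
qed

lemma decseq_diff_bound: "decseq diff_bound"
  using rho_bounds by (intro decseq_SucI) (simp add: diff_bound_def power_decreasing)

lemma level_bounded_mono: "level_bounded j a n \<Longrightarrow> j \<le> k \<Longrightarrow> level_bounded k a n"
  using incseqD[OF incseq_sum_bound] decseqD[OF decseq_diff_bound]
  unfolding level_bounded_def by (meson order_trans)

lemma F_2 [simp]: "F 2 = 1" and F_3 [simp]: "F 3 = 2"
  by (simp_all add: numeral_eq_Suc)

lemma level_bounded_0: "level_bounded 0 1 1"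
  using diff_bound_neg[of 0] kappa_bounds by (simp add: level_bounded_def sum_bound_def)

lemma level_bounded_1: "level_bounded 1 1 2"
proof -
  have "sqrt (5::real) < 9/4"
    by (rule real_less_lsqrt) (simp_all add: power2_eq_square)
  moreover have "rho ^ 3 = sqrt 5 - 2"
    by (simp add: rho_def field_simps power_def numeral_eq_Suc)
  moreover have "2 * kappa = 1 + sqrt 5 / 5"
    by (simp add: kappa_def phi_def field_simps)
  moreover have "sum_bound 1 = 5/2 + kappa - rho / 5" "diff_bound 1 = rho ^ 3 / 5 - 1/2"
    by (simp_all add: sum_bound_def diff_bound_def power3_eq_cube)
  ultimately have "1 + kappa * 2 \<le> sum_bound 1" "diff_bound 1 \<le> 1 - kappa * 2"
    using rho_bounds kappa_bounds by linarith+
  then show ?thesis by (simp add: level_bounded_def)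
qed

lemma diff_bound_add_2_le: "diff_bound (k + 2) \<le> F (k + 4) - kappa * F (k + 3) - sum_bound k"
proof -
  have "diff_bound (k + 2) = rho ^ (k + 4) / 5 - 1/2"
    by (simp only: diff_bound_def add.assoc numeral_plus_numeral add_num_simps)
  also have "\<dots> = - (rho ^ (k + 2)) / sqrt 5 + rho ^ k / 5 - 1/2"
    unfolding rho_pow_add_4 by (simp add: field_simps)
  also have "\<dots> \<le> - (psi ^ (k + 2)) / sqrt 5 + rho ^ k / 5 - 1/2"
    using psi_pow_le_rho_pow[of "k + 2"] by (simp add: divide_right_mono)
  also have "\<dots> = F (k + 3) - kappa * (real (F (k + 3)) + F (k + 1)) + rho ^ k / 5 - 1/2"
    using kappa_mult_F_add_2_plus_F[of "k + 1"] by (simp add: numeral_eq_Suc algebra_simps del: F.simps)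
  also have "\<dots> = F (k + 4) - kappa * F (k + 3) - sum_bound k"
    by (simp add: sum_bound_def algebra_simps numeral_eq_Suc)
  finally show ?thesis .
qed

lemma level_bounded_add_2:
  fixes a :: real
  assumes "level_bounded k a m"
  shows "level_bounded (k + 2) (F (k + 4) - a) (F (k + 3) + m)"
proof -
  have "sum_bound (k + 2) = F (k + 4) + kappa * F (k + 3) - diff_bound k"
    by (simp add: sum_bound_def diff_bound_def numeral_eq_Suc del: F.simps)
  then show ?thesis
    using assms diff_bound_add_2_le[of k] by (simp add: level_bounded_def algebra_simps)
qed

declare A.simps [simp del]

lemma A_0 [simp]: "A 0 = 0" and A_1: "A 1 = 1"
  by (simp_all add: A.simps)

lemma A_split:
  assumes "2 \<le> n"
  obtains t m where "n = F (t + 2) + m" "1 \<le> m" "m \<le> F (t + 1)" "A n = F (t + 3) - A m"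
proof -
  obtain t where t: "fibidx n = t + 2"
    using fibidx[OF assms] by (metis add.commute le_Suc_ex)
  have "F (t + 2) < n" "n \<le> F (t + 3)"
    using fibidx[OF assms] by (simp_all add: t numeral_eq_Suc del: F.simps)
  moreover have "A n = F (t + 3) - A (n - F (t + 2))"
    using assms by (subst A.simps) (simp add: t numeral_eq_Suc del: F.simps)
  ultimately show ?thesis
    by (intro that[of t "n - F (t + 2)"]) (simp_all add: numeral_eq_Suc)
qed

lemma A_level_bounded: "1 \<le> n \<Longrightarrow> n \<le> F (k + 2) \<Longrightarrow> level_bounded k (A n) n"
proof (induction n arbitrary: k rule: less_induct)
  case (less n)
  consider "n = 1" | "2 \<le> n" using less.prems by linarith
  then show ?case
  proof cases
    case 1
    then show ?thesis using level_bounded_0 level_bounded_mono A_1 by auto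
  next
    case 2
    then obtain t m where split: "n = F (t + 2) + m" "1 \<le> m" "m \<le> F (t + 1)" "A n = F (t + 3) - A m"
      by (rule A_split)
    show ?thesis
    proof (cases t)
      case 0
      then have "n = 2" "A n = 1" using split A_1 by (simp_all add: numeral_eq_Suc)
      moreover have "1 \<le> k"
        using less.prems(2) \<open>n = 2\<close> by (cases k) simp_all
      ultimately show ?thesis using level_bounded_1 level_bounded_mono by simp
    next
      case (Suc s)
      then have n: "n = F (s + 3) + m" "A n = F (s + 4) - A m" and "m \<le> F (s + 2)"
        using split by (simp_all add: numeral_eq_Suc del: F.simps)
      have "s + 2 \<le> k"
      proof (rule ccontr)
        assume "\<not> s + 2 \<le> k"
        then have "F (k + 2) \<le> F (s + 3)" by (intro F_mono) simp
        then show False using n(1) split(2) less.prems(2) by linarith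
      qed
      have "m < n" using n(1) F_mono[of 1 "s + 3"] by simp
      then have "level_bounded s (A m) m"
        using less.IH split(2) \<open>m \<le> F (s + 2)\<close> by blast
      then show ?thesis
        using level_bounded_add_2 level_bounded_mono \<open>s + 2 \<le> k\<close> n by fastforce
    qed
  qed
qed

lemma A_lower_bound: "kappa * n - 1/2 < A n"
proof (cases "n = 0")
  case False
  have "n \<le> F (n + 2)" using F_ge[of n] by simp
  then have "diff_bound n \<le> A n - kappa * n"
    using A_level_bounded[of n n] False by (simp add: level_bounded_def)
  then show ?thesis using diff_bound_gt[of n] by linarith
qed simp

lemma A_nonneg: "0 \<le> A n"
proof -
  have "0 \<le> kappa * n" using kappa_bounds by simp
  then show ?thesis using A_lower_bound[of n] by linarith
qed

lemma one_le_phi: "1 \<le> phi"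
  by (simp add: phi_def)

lemma A_upper_bound: "A n \<le> phi * n"
proof -
  consider "n = 0" | "n = 1" | "2 \<le> n" by linarith
  then show ?thesis
  proof cases
    case 3
    then obtain t m where split: "n = F (t + 2) + m" "1 \<le> m" "A n = F (t + 3) - A m"
      by (rule A_split)
    have "psi ^ (t + 2) \<le> 1"
      using psi_pow_le_rho_pow[of "t + 2"] rho_bounds power_le_one[of rho "t + 2"] by linarith
    then have "real (F (t + 3)) \<le> phi * F (t + 2) + 1"
      using F_Suc_minus_phi_mult[of "t + 2"] by (simp add: numeral_eq_Suc del: F.simps)
    also have "\<dots> \<le> phi * F (t + 2) + phi * m"
      using one_le_phi split(2) mult_mono[of 1 phi 1 "real m"] by simp
    also have "\<dots> = phi * n"
      using split(1) by (simp add: distrib_left)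
    finally show ?thesis
      using split(3) A_nonneg[of m] by simp
  qed (use A_1 one_le_phi in simp_all)
qed

theorem proposition6:
  fixes n :: nat
  shows "\<lfloor>(phi + 2) / 5 * real n\<rfloor> \<le> A n \<and> A n \<le> \<lfloor>phi * real n\<rfloor>"
proof
  show "\<lfloor>(phi + 2) / 5 * real n\<rfloor> \<le> A n"
    using A_lower_bound[of n] unfolding floor_le_iff kappa_def by linarith
  show "A n \<le> \<lfloor>phi * real n\<rfloor>"
    using A_upper_bound[of n] unfolding le_floor_iff .
qed

end
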